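(* For every instance of PKP, every optimal solution set $S^*$ satisfies $\sum_{j\in S^*}\log(|p_j|)\ge \log(p_{\max})$, where $p_{\max}=\max_{j\in N}|p_j|$ and $\log$ is the base-2 logarithm.
   Context: The Product Knapsack Problem (PKP): items $j\in N=\{1,\dots,n\}$ with integer weights $w_j$ and integer profits $p_j$, and a positive integer capacity $C$; find $S\subseteq N$ with $\sum_{j\in S}w_j\le C$ maximizing $\prod_{j\in S}p_j$ (the empty set has value $0$). Instances are assumed to satisfy: (a) $w_j\le C$ for all $j$; (b) $p_j\ne 0$ for all $j$; (c) for each $j$ with $p_j<0$ there is $j'\ne j$ with $p_{j'}<0$ and $w_j+w_{j'}\le C$; (d) $w_j\ge 0$ for all $j$; (e) $p_j<0$ whenever $w_j=0$. *)

theory Defs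
  imports Complex_Main
begin

definition pkp_instance :: "nat \<Rightarrow> (nat \<Rightarrow> int) \<Rightarrow> (nat \<Rightarrow> int) \<Rightarrow> int \<Rightarrow> bool" where
  "pkp_instance n w p C \<longleftrightarrow>
     C > 0 \<and>
     (\<forall>j\<in>{1..n}. w j \<le> C) \<and>
     (\<forall>j\<in>{1..n}. p j \<noteq> 0) \<and>
     (\<forall>j\<in>{1..n}. p j < 0 \<longrightarrow> (\<exists>j'\<in>{1..n}. j' \<noteq> j \<and> p j' < 0 \<and> w j + w j' \<le> C)) \<and>
     (\<forall>j\<in>{1..n}. w j \<ge> 0) \<and>
     (\<forall>j\<in>{1..n}. w j = 0 \<longrightarrow> p j < 0)"

definition pkp_feasible :: "nat \<Rightarrow> (nat \<Rightarrow> int) \<Rightarrow> int \<Rightarrow> nat set \<Rightarrow> bool" where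
  "pkp_feasible n w C S \<longleftrightarrow> S \<subseteq> {1..n} \<and> (\<Sum>j\<in>S. w j) \<le> C"

definition pkp_value :: "(nat \<Rightarrow> int) \<Rightarrow> nat set \<Rightarrow> int" where
  "pkp_value p S = (if S = {} then 0 else (\<Prod>j\<in>S. p j))"

definition pkp_optimal :: "nat \<Rightarrow> (nat \<Rightarrow> int) \<Rightarrow> (nat \<Rightarrow> int) \<Rightarrow> int \<Rightarrow> nat set \<Rightarrow> bool" where
  "pkp_optimal n w p C S \<longleftrightarrow> pkp_feasible n w C S \<and>
     (\<forall>T. pkp_feasible n w C T \<longrightarrow> pkp_value p T \<le> pkp_value p S)"

end

theory Submission
  imports Defs
begin

text \<open>Let \<open>k\<close> be an item of largest absolute profit. If \<open>p k > 0\<close>, the singleton \<open>{k}\<close>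
  is feasible; if \<open>p k < 0\<close>, the instance provides a second negative item \<open>j\<close> fitting
  together with \<open>k\<close>, and \<open>p k * p j \<ge> \<bar>p k\<bar>\<close>. Either way the optimal value is at
  least \<open>p\<^sub>m\<^sub>a\<^sub>x \<ge> 1\<close>, so it is positive and equals \<open>\<Prod>j\<in>S. \<bar>p j\<bar>\<close>; taking
  logarithms gives the claim.\<close>

lemma log_prod:
  fixes f :: "'a \<Rightarrow> real"
  assumes "finite I" and "\<And>i. i \<in> I \<Longrightarrow> f i > 0"
  shows "log b (\<Prod>i\<in>I. f i) = (\<Sum>i\<in>I. log b (f i))"
proof -
  have "ln (\<Prod>i\<in>I. f i) = (\<Sum>i\<in>I. ln (f i))"
    using assms by (intro ln_prod) (auto simp: less_imp_neq[symmetric])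
  then show ?thesis
    by (simp add: log_def sum_divide_distrib)
qed

lemma pkp_optimal_value_ge:
  assumes "pkp_optimal n w p C S" and "pkp_feasible n w C T"
  shows "pkp_value p T \<le> pkp_value p S"
  using assms unfolding pkp_optimal_def by blast

lemma pkp_value_pair:
  "j \<noteq> k \<Longrightarrow> pkp_value p {j, k} = p j * p k"
  by (simp add: pkp_value_def)

lemma pkp_optimal_value_ge_abs_profit:
  assumes inst: "pkp_instance n w p C" and opt: "pkp_optimal n w p C S"
    and k: "k \<in> {1..n}"
  shows "\<bar>p k\<bar> \<le> pkp_value p S"
proof (cases "p k > 0")
  case True
  have "pkp_feasible n w C {k}"
    using inst k unfolding pkp_instance_def pkp_feasible_def by auto
  from pkp_optimal_value_ge[OF opt this] True show ?thesis
    by (simp add: pkp_value_def)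
next
  case False
  have "p k \<noteq> 0" and partner: "p k < 0 \<Longrightarrow> \<exists>j\<in>{1..n}. j \<noteq> k \<and> p j < 0 \<and> w k + w j \<le> C"
    using inst k unfolding pkp_instance_def by auto
  with False have neg: "p k < 0"
    by linarith
  then obtain j where j: "j \<in> {1..n}" "j \<noteq> k" "p j < 0" "w k + w j \<le> C"
    using partner by blast
  have "pkp_feasible n w C {k, j}"
    using k j unfolding pkp_feasible_def by auto
  from pkp_optimal_value_ge[OF opt this] have "p k * p j \<le> pkp_value p S"
    using j(2) by (simp add: pkp_value_pair)
  moreover have "\<bar>p k\<bar> \<le> p k * p j"
  proof -
    have "\<bar>p k\<bar> * 1 \<le> \<bar>p k\<bar> * \<bar>p j\<bar>"
      using j(3) by (intro mult_left_mono) auto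
    then show ?thesis
      using neg j(3) by (simp add: abs_of_neg)
  qed
  ultimately show ?thesis by linarith
qed

theorem lemma3:
  fixes n :: nat and w p :: "nat \<Rightarrow> int" and C :: int and S :: "nat set"
  assumes "n \<ge> 1"
    and "pkp_instance n w p C"
    and "pkp_optimal n w p C S"
  shows "(\<Sum>j\<in>S. log 2 \<bar>real_of_int (p j)\<bar>) \<ge> log 2 (real_of_int (Max ((\<lambda>j. \<bar>p j\<bar>) ` {1..n})))"
proof -
  obtain k where k: "k \<in> {1..n}" and max_eq: "Max ((\<lambda>j. \<bar>p j\<bar>) ` {1..n}) = \<bar>p k\<bar>"
    using Max_in[of "(\<lambda>j. \<bar>p j\<bar>) ` {1..n}"] assms(1) by fastforce
  have S_sub: "S \<subseteq> {1..n}" and nonzero: "\<forall>j\<in>{1..n}. p j \<noteq> 0"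
    using assms(2,3) unfolding pkp_optimal_def pkp_feasible_def pkp_instance_def by auto
  have S_finite: "finite S"
    using S_sub finite_subset by blast
  have pk_pos: "\<bar>p k\<bar> \<ge> 1"
    using k nonzero by (simp add: int_one_le_iff_zero_less)
  have value_ge: "\<bar>p k\<bar> \<le> pkp_value p S"
    using pkp_optimal_value_ge_abs_profit[OF assms(2,3) k] .
  with pk_pos have "S \<noteq> {}"
    by (auto simp: pkp_value_def)
  then have "\<bar>real_of_int (pkp_value p S)\<bar> = (\<Prod>j\<in>S. \<bar>real_of_int (p j)\<bar>)"
    by (simp add: pkp_value_def abs_prod)
  also have "log 2 \<dots> = (\<Sum>j\<in>S. log 2 \<bar>real_of_int (p j)\<bar>)"
    using S_finite S_sub nonzero by (intro log_prod) auto
  finally have "(\<Sum>j\<in>S. log 2 \<bar>real_of_int (p j)\<bar>) = log 2 \<bar>real_of_int (pkp_value p S)\<bar>"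
    by simp
  moreover have "log 2 \<bar>real_of_int (p k)\<bar> \<le> log 2 \<bar>real_of_int (pkp_value p S)\<bar>"
    using pk_pos value_ge by (subst log_le_cancel_iff) auto
  ultimately show ?thesis
    using max_eq by simp
qed

end
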